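(* Let $G=(V,E)$ be a computation graph with $n=|V|$ vertices and fast-memory size $M$. Let $J^*_G$ be the minimum number of non-trivial I/Os over all valid evaluations of $G$. Let $\lambda_1(\tilde L)\le\lambda_2(\tilde L)\le\dots\le\lambda_n(\tilde L)$ be the eigenvalues of $\tilde L$ in increasing order. Then for every integer $k$ with $1\le k\le n$, $$J^*_G \;\geq\; \left\lfloor \frac{n}{k}\right\rfloor \sum_{i=1}^k \lambda_i(\tilde L) \;-\; 2kM.$$
   Context: A computation graph is a finite directed acyclic graph $G=(V,E)$. Each vertex is an operation producing a single element, and an edge $(u,v)$ means the result of $u$ is an operand of $v$. Sources are the inputs and sinks are the outputs. Execution model: a single processor has a fast memory holding at most $M$ elements and an unbounded slow memory. Every vertex is evaluated exactly once (no recomputation), in an order that is topological with respect to $G$. To evaluate $v$, all parents of $v$ must be in fast memory; a parent not present must be read from slow memory. The eviction policy is unconstrained, but a value that is evicted while still needed by a later vertex must first be written to slow memory. Only non-trivial I/O is counted. Inputs can be placed directly into fast memory at no cost, and outputs are reported immediately at no cost when computed. However, an input that is evicted while still needed must be written to slow memory. Each transfer of one element between fast and slow memory counts as one I/O. $\tilde L=\tilde D-\tilde A$ is the Laplacian of the weighted undirected graph $\tilde G$ on $V$. For each directed edge $(u,v)\in E$, $\tilde G$ contains the undirected edge $\{u,v\}$ with weight $1/d_{out}(u)$, where $d_{out}$ is out-degree in $G$. $\tilde A$ is its weighted adjacency matrix and $\tilde D$ its diagonal weighted-degree matrix. *)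

theory Defs
  imports "Jordan_Normal_Form.Char_Poly" "HOL-Library.Multiset" "HOL-Library.Extended_Real"
begin

text \<open>Computation graph: vertex set {0..<n}, directed edges E (acyclic, within the vertex set).\<close>

definition dout :: "nat rel \<Rightarrow> nat \<Rightarrow> nat" where
  "dout E u = card {v. (u, v) \<in> E}"

definition wadj :: "nat rel \<Rightarrow> nat \<Rightarrow> nat \<Rightarrow> real" where
  "wadj E u v = (if (u, v) \<in> E then 1 / real (dout E u) else 0)
              + (if (v, u) \<in> E then 1 / real (dout E v) else 0)"

definition wdeg :: "nat \<Rightarrow> nat rel \<Rightarrow> nat \<Rightarrow> real" where
  "wdeg n E u = (\<Sum>v<n. wadj E u v)"

definition laplacian :: "nat \<Rightarrow> nat rel \<Rightarrow> real mat" where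
  "laplacian n E = mat n n (\<lambda>(i, j). (if i = j then wdeg n E i else 0) - wadj E i j)"

definition sorted_eigenvalues :: "real mat \<Rightarrow> real list" where
  "sorted_eigenvalues A = sorted_list_of_multiset (proots (char_poly A))"

text \<open>Execution model. State = (fast memory R, slow memory B, already computed C).\<close>
datatype move = Load nat | Store nat | Evict nat | Compute nat

type_synonym state = "nat set \<times> nat set \<times> nat set"

fun step :: "nat \<Rightarrow> nat rel \<Rightarrow> nat \<Rightarrow> move \<Rightarrow> state \<Rightarrow> state option" where
  "step n E M (Load v) (R, B, C) =
     (if v \<in> B \<and> card (insert v R) \<le> M then Some (insert v R, B, C) else None)"
| "step n E M (Store v) (R, B, C) =
     (if v \<in> R then Some (R, insert v B, C) else None)"
| "step n E M (Evict v) (R, B, C) =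
     (if v \<in> R then Some (R - {v}, B, C) else None)"
| "step n E M (Compute v) (R, B, C) =
     (if v < n \<and> v \<notin> C \<and> (\<forall>u. (u, v) \<in> E \<longrightarrow> u \<in> R) \<and> card (insert v R) \<le> M
      then Some (insert v R, B, insert v C) else None)"

fun run :: "nat \<Rightarrow> nat rel \<Rightarrow> nat \<Rightarrow> move list \<Rightarrow> state \<Rightarrow> state option" where
  "run n E M [] s = Some s"
| "run n E M (m # ms) s = (case step n E M m s of None \<Rightarrow> None | Some s' \<Rightarrow> run n E M ms s')"

definition valid_evaluation :: "nat \<Rightarrow> nat rel \<Rightarrow> nat \<Rightarrow> move list \<Rightarrow> bool" where
  "valid_evaluation n E M ms =
     (\<exists>R B. run n E M ms ({}, {}, {}) = Some (R, B, {0..<n}))"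

fun is_io :: "move \<Rightarrow> bool" where
  "is_io (Load _) = True"
| "is_io (Store _) = True"
| "is_io (Evict _) = False"
| "is_io (Compute _) = False"

definition io_cost :: "move list \<Rightarrow> nat" where
  "io_cost ms = length (filter is_io ms)"

text \<open>Minimum number of non-trivial I/Os (infinity if no valid evaluation exists).\<close>
definition J_star :: "nat \<Rightarrow> nat rel \<Rightarrow> nat \<Rightarrow> ereal" where
  "J_star n E M = (INF ms \<in> {ms. valid_evaluation n E M ms}. ereal (real (io_cost ms)))"

end

(*
  Fix a valid evaluation and cut the vertices, in the order in which they are computed, into
  k consecutive segments of at least n div k vertices each.  A vertex u with an edge into a
  later segment is still needed when the next segment starts: it is then in fast memory, or
  it is reloaded later and so must have been stored.  A vertex outside a segment with an edge
  into it is in fast memory when the segment starts, or it is loaded while the segment is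
  computed.  Since the out-edges of each vertex carry total weight at most 1, the weighted cut
  of the partition is at most (#stores + kM) + (#loads + kM).  On the other hand, the cut of a
  segment is the Laplacian quadratic form of its indicator vector, and expanding the indicator
  vectors in an orthonormal eigenbasis gives (n div k) (lambda_1 + ... + lambda_k) <= sum of
  the cuts.
*)
theory Submission
  imports Defs "Jordan_Normal_Form.Schur_Decomposition" "HOL-Analysis.Convex"
begin

no_notation inner (infix "\<bullet>" 70)

section \<open>Orthogonal diagonalization of real symmetric matrices\<close>

lemma orthogonal_basis_with_head:
  fixes v :: "real vec"
  assumes v: "v \<in> carrier_vec n" and v0: "v \<noteq> 0\<^sub>v n"
  obtains ws where "set ws \<subseteq> carrier_vec n" "length ws = n" "ws ! 0 = v"
    "\<And>i j. i < n \<Longrightarrow> j < n \<Longrightarrow> ws ! i \<bullet> ws ! j = 0 \<longleftrightarrow> i \<noteq> j"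
proof -
  have n: "0 < n" using v v0 by (cases n) auto
  interpret cof_vec_space n "TYPE(real)" .
  define b where "b = basis_completion v"
  from basis_completion[OF v v0, folded b_def]
  have dist_b: "distinct b" and indep: "\<not> lin_dep (set b)" and b: "set b \<subseteq> carrier_vec n"
    and hdb: "hd b = v" and len_b: "length b = n" by auto
  from hdb len_b n obtain vs where bv: "b = v # vs" by (cases b) auto
  define ws where "ws = gram_schmidt n b"
  from gram_schmidt_result[OF b dist_b indep refl, folded ws_def]
  have ws: "set ws \<subseteq> carrier_vec n" "corthogonal ws" "length ws = n" by (auto simp: len_b)
  moreover have "ws ! 0 = v"
    using gram_schmidt_hd[OF v, of vs, folded bv ws_def] ws(3) n by (cases ws) auto
  moreover have "ws ! i \<bullet> ws ! j = 0 \<longleftrightarrow> i \<noteq> j" if "i < n" "j < n" for i j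
    using ws(2,3) that unfolding corthogonal_def by simp
  ultimately show thesis using that by blast
qed

lemma orthogonal_mat_with_first_col:
  fixes v :: "real vec"
  assumes v: "v \<in> carrier_vec n" and v0: "v \<noteq> 0\<^sub>v n"
  obtains W where "W \<in> carrier_mat n n" "transpose_mat W * W = 1\<^sub>m n"
    "col W 0 = (1 / sqrt (v \<bullet> v)) \<cdot>\<^sub>v v"
proof -
  obtain ws where ws: "set ws \<subseteq> carrier_vec n" "length ws = n" and ws0: "ws ! 0 = v"
    and ws_orth: "\<And>i j. i < n \<Longrightarrow> j < n \<Longrightarrow> ws ! i \<bullet> ws ! j = 0 \<longleftrightarrow> i \<noteq> j"
    using orthogonal_basis_with_head[OF v v0] by blast
  have n: "0 < n" using v v0 by (cases n) auto
  have wsc: "ws ! i \<in> carrier_vec n" if "i < n" for i using ws that by auto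
  have ws_pos: "ws ! i \<bullet> ws ! i > 0" if "i < n" for i
    using ws_orth[OF that that] conjugate_square_greater_0_vec[OF wsc[OF that]] wsc[OF that]
    by fastforce
  define us where "us = map (\<lambda>w. (1 / sqrt (w \<bullet> w)) \<cdot>\<^sub>v w) ws"
  have usc: "us ! i \<in> carrier_vec n" if "i < n" for i using wsc that ws(2) by (simp add: us_def)
  have us_orth: "us ! i \<bullet> us ! j = (if i = j then 1 else 0)" if i: "i < n" and j: "j < n" for i j
  proof -
    have "us ! i \<bullet> us ! j
        = (1 / sqrt (ws ! i \<bullet> ws ! i)) * (1 / sqrt (ws ! j \<bullet> ws ! j)) * (ws ! i \<bullet> ws ! j)"
      using i j ws(2) wsc[OF i] wsc[OF j] by (simp add: us_def)
    then show ?thesis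
      using ws_orth[OF i j] ws_pos[OF i] ws_pos[OF j]
      by (cases "i = j") (auto simp: real_sqrt_mult[symmetric])
  qed
  define W where "W = mat_of_cols n us"
  have W: "W \<in> carrier_mat n n" using ws(2) by (simp add: W_def us_def mat_of_cols_def)
  have colW: "col W i = us ! i" if "i < n" for i
    using usc ws(2) that by (simp add: W_def col_mat_of_cols us_def)
  show thesis
  proof
    show "W \<in> carrier_mat n n" by (fact W)
    show "transpose_mat W * W = 1\<^sub>m n"
      by (rule eq_matI) (use W in \<open>auto simp: colW us_orth\<close>)
    show "col W 0 = (1 / sqrt (v \<bullet> v)) \<cdot>\<^sub>v v"
      using n ws(2) ws0 by (simp add: colW us_def)
  qed
qed

lemma symmetric_mat_deflation:
  fixes A W :: "real mat"
  assumes A: "A \<in> carrier_mat (Suc n) (Suc n)" and sym: "transpose_mat A = A"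
    and W: "W \<in> carrier_mat (Suc n) (Suc n)" and orth: "transpose_mat W * W = 1\<^sub>m (Suc n)"
    and eig: "A *\<^sub>v col W 0 = e \<cdot>\<^sub>v col W 0"
  obtains B where "B \<in> carrier_mat n n" "transpose_mat B = B"
    "transpose_mat W * A * W = four_block_mat (mat 1 1 (\<lambda>_. e)) (0\<^sub>m 1 n) (0\<^sub>m n 1) B"
proof -
  define A' where "A' = transpose_mat W * A * W"
  have A': "A' \<in> carrier_mat (Suc n) (Suc n)" unfolding A'_def using W A by auto
  have A'_sym: "transpose_mat A' = A'"
    unfolding A'_def using W A sym
    by (simp add: transpose_mult[of _ "Suc n" "Suc n" _ "Suc n"]
        assoc_mult_mat[of _ "Suc n" "Suc n" _ "Suc n" _ "Suc n"])
  have A'_col0: "A' $$ (i, 0) = (if i = 0 then e else 0)" if i: "i < Suc n" for i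
  proof -
    have col_AW: "col (A * W) 0 = e \<cdot>\<^sub>v col W 0" using W A eig by (subst col_mult2) auto
    have row_Wt: "row (transpose_mat W) i = col W i" using i W by simp
    have "A' $$ (i, 0) = row (transpose_mat W) i \<bullet> col (A * W) 0"
      unfolding A'_def using i W A by (simp add: assoc_mult_mat[OF _ A W])
    also have "\<dots> = col W i \<bullet> (e \<cdot>\<^sub>v col W 0)" unfolding col_AW row_Wt ..
    also have "\<dots> = e * (transpose_mat W * W) $$ (i, 0)" using i W by simp
    finally show ?thesis using orth i by simp
  qed
  have A'_swap: "A' $$ (j, i) = A' $$ (i, j)" if "i < Suc n" "j < Suc n" for i j
    using arg_cong[OF A'_sym, of "\<lambda>X. X $$ (i, j)"] that A' by simp
  have A'_row0: "A' $$ (0, j) = (if j = 0 then e else 0)" if j: "j < Suc n" for j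
    using A'_col0[OF j] A'_swap[OF j] by simp
  define B where "B = mat n n (\<lambda>(i, j). A' $$ (Suc i, Suc j))"
  show thesis
  proof
    show "B \<in> carrier_mat n n" by (simp add: B_def)
    show "transpose_mat B = B"
      by (rule eq_matI) (auto simp: B_def A'_swap)
    show "transpose_mat W * A * W = four_block_mat (mat 1 1 (\<lambda>_. e)) (0\<^sub>m 1 n) (0\<^sub>m n 1) B"
      unfolding A'_def[symmetric]
      by (rule eq_matI) (use A' A'_col0 A'_row0 in \<open>auto simp: B_def less_Suc_eq_0_disj\<close>)
  qed
qed

lemma symmetric_mat_eigen_deflation:
  fixes A :: "real mat"
  assumes A: "A \<in> carrier_mat (Suc n) (Suc n)" and sym: "transpose_mat A = A"
    and e: "eigenvalue A e"
  obtains W B where "W \<in> carrier_mat (Suc n) (Suc n)" "transpose_mat W * W = 1\<^sub>m (Suc n)"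
    "B \<in> carrier_mat n n" "transpose_mat B = B"
    "transpose_mat W * A * W = four_block_mat (mat 1 1 (\<lambda>_. e)) (0\<^sub>m 1 n) (0\<^sub>m n 1) B"
proof -
  from find_eigenvector[OF A e]
  obtain v where v: "v \<in> carrier_vec (Suc n)" "v \<noteq> 0\<^sub>v (Suc n)" and Av: "A *\<^sub>v v = e \<cdot>\<^sub>v v"
    unfolding eigenvector_def using A by auto
  obtain W where W: "W \<in> carrier_mat (Suc n) (Suc n)" "transpose_mat W * W = 1\<^sub>m (Suc n)"
    and W0: "col W 0 = (1 / sqrt (v \<bullet> v)) \<cdot>\<^sub>v v"
    using orthogonal_mat_with_first_col[OF v] .
  have "A *\<^sub>v col W 0 = e \<cdot>\<^sub>v col W 0"
    unfolding W0 mult_mat_vec[OF A v(1)] Av by (simp add: smult_smult_assoc mult.commute)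
  from symmetric_mat_deflation[OF A sym W this] that W show thesis by blast
qed

lemma char_poly_orthogonal_deflation:
  fixes A W :: "'a :: field mat"
  assumes A: "A \<in> carrier_mat (Suc n) (Suc n)"
    and W: "W \<in> carrier_mat (Suc n) (Suc n)" and orth: "transpose_mat W * W = 1\<^sub>m (Suc n)"
    and B: "B \<in> carrier_mat n n"
    and WAW: "transpose_mat W * A * W = four_block_mat (mat 1 1 (\<lambda>_. e)) (0\<^sub>m 1 n) (0\<^sub>m n 1) B"
  shows "char_poly A = [:-e, 1:] * char_poly B"
proof -
  have "W * transpose_mat W = 1\<^sub>m (Suc n)"
    using mat_mult_left_right_inverse[OF _ W orth] W by auto
  then have "similar_mat (transpose_mat W * A * W) A"
    by (intro similar_matI[where n = "Suc n" and P = "transpose_mat W" and Q = W])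
      (use A W orth in auto)
  from char_poly_similar[OF this] show ?thesis
    unfolding WAW using B
    by (subst (asm) char_poly_four_block_zeros_col) (auto simp: char_poly_defs det_def sign_def)
qed

lemma mat_diag_Cons:
  "mat_diag (Suc n) ((!) (e # es))
    = four_block_mat (mat 1 1 (\<lambda>_. e)) (0\<^sub>m 1 n) (0\<^sub>m n 1) (mat_diag n ((!) es))"
  by (rule eq_matI) (auto simp: mat_diag_def)

lemma orthogonal_four_block_mat_one:
  fixes P :: "'a :: comm_ring_1 mat"
  assumes P: "P \<in> carrier_mat n n" and orth: "transpose_mat P * P = 1\<^sub>m n"
  defines "Q \<equiv> four_block_mat (1\<^sub>m 1) (0\<^sub>m 1 n) (0\<^sub>m n 1) P"
  shows "transpose_mat Q * Q = 1\<^sub>m (Suc n)"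
proof -
  have "transpose_mat Q = four_block_mat (1\<^sub>m 1) (0\<^sub>m 1 n) (0\<^sub>m n 1) (transpose_mat P)"
    unfolding Q_def using P by (subst transpose_four_block_mat) auto
  also have "\<dots> * Q = four_block_mat (1\<^sub>m 1) (0\<^sub>m 1 n) (0\<^sub>m n 1) (1\<^sub>m n)"
    unfolding Q_def using P orth by (subst mult_four_block_mat) auto
  also have "\<dots> = 1\<^sub>m (Suc n)" by (rule eq_matI) auto
  finally show ?thesis .
qed

lemma orthogonal_mat_mult:
  fixes P Q :: "'a :: comm_ring_1 mat"
  assumes P: "P \<in> carrier_mat n n" "transpose_mat P * P = 1\<^sub>m n"
    and Q: "Q \<in> carrier_mat n n" "transpose_mat Q * Q = 1\<^sub>m n"
  shows "transpose_mat (P * Q) * (P * Q) = 1\<^sub>m n"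
proof -
  have "transpose_mat (P * Q) * (P * Q) = transpose_mat Q * (transpose_mat P * P) * Q"
    using P(1) Q(1) by (simp add: transpose_mult[OF P(1) Q(1)] assoc_mult_mat[of _ n n _ n _ n])
  also have "\<dots> = 1\<^sub>m n" unfolding P(2) using Q by simp
  finally show ?thesis .
qed

lemma mult_orthogonal_conj:
  fixes A W Q D :: "'a :: comm_ring_1 mat"
  assumes A: "A \<in> carrier_mat n n" and W: "W \<in> carrier_mat n n" "W * transpose_mat W = 1\<^sub>m n"
    and Q: "Q \<in> carrier_mat n n" and WAWQ: "transpose_mat W * A * W * Q = Q * D"
    and D: "D \<in> carrier_mat n n"
  shows "A * (W * Q) = W * Q * D"
proof -
  have "A * (W * Q) = (W * transpose_mat W) * (A * (W * Q))" using W A Q by simp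
  also have "\<dots> = W * (transpose_mat W * A * W * Q)"
    using A W(1) Q by (simp add: assoc_mult_mat[of _ n n _ n _ n])
  also have "\<dots> = W * Q * D"
    unfolding WAWQ using W Q D by (simp add: assoc_mult_mat[of _ n n _ n _ n])
  finally show ?thesis .
qed

lemma four_block_mat_diagonalization_step:
  fixes B P :: "'a :: comm_ring_1 mat"
  assumes B: "B \<in> carrier_mat n n" and P: "P \<in> carrier_mat n n"
    and BP: "B * P = P * mat_diag n ((!) es)"
  defines "Q \<equiv> four_block_mat (1\<^sub>m 1) (0\<^sub>m 1 n) (0\<^sub>m n 1) P"
  shows "four_block_mat (mat 1 1 (\<lambda>_. e)) (0\<^sub>m 1 n) (0\<^sub>m n 1) B * Q
    = Q * mat_diag (Suc n) ((!) (e # es))"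
  unfolding Q_def mat_diag_Cons using B P carrier_matD[OF mat_diag_dim[of n "(!) es"]]
  by (subst (1 2) mult_four_block_mat) (auto simp: BP)

lemma real_symmetric_mat_diagonalization:
  fixes A :: "real mat"
  assumes "A \<in> carrier_mat n n" and "transpose_mat A = A" and "char_poly A = (\<Prod>e\<leftarrow>es. [:-e, 1:])"
  shows "\<exists>P \<in> carrier_mat n n. transpose_mat P * P = 1\<^sub>m n \<and> A * P = P * mat_diag n ((!) es)"
  using assms
proof (induction es arbitrary: n A)
  case Nil
  then have "n = 0" using degree_monic_char_poly[of A n] by simp
  then show ?case
    using Nil.prems(1) by (intro bexI[of _ "1\<^sub>m 0"]) (auto intro!: eq_matI simp: mat_diag_def)
next
  case (Cons e es n A)
  note A = Cons.prems(1) and sym = Cons.prems(2)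
  have cp: "char_poly A = [:-e, 1:] * (\<Prod>e\<leftarrow>es. [:-e, 1:])" using Cons.prems(3) by simp
  define m where "m = length es"
  have n: "n = Suc m"
    using degree_monic_char_poly[OF A] degree_linear_factors[of uminus "e # es"] Cons.prems(3)
    by (simp add: m_def)
  have "eigenvalue A e" unfolding eigenvalue_root_char_poly[OF A] cp by simp
  then obtain W B where W: "W \<in> carrier_mat n n" and W_orth: "transpose_mat W * W = 1\<^sub>m n"
    and B: "B \<in> carrier_mat m m" "transpose_mat B = B"
    and WAW: "transpose_mat W * A * W = four_block_mat (mat 1 1 (\<lambda>_. e)) (0\<^sub>m 1 m) (0\<^sub>m m 1) B"
    using symmetric_mat_eigen_deflation[of A m e] A sym unfolding n by blast
  have W_orth': "W * transpose_mat W = 1\<^sub>m n"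
    using mat_mult_left_right_inverse[OF _ W W_orth] W by auto
  have "char_poly A = [:-e, 1:] * char_poly B"
    using A W W_orth B(1) WAW unfolding n by (rule char_poly_orthogonal_deflation)
  then have "char_poly B = (\<Prod>e\<leftarrow>es. [:-e, 1:])"
    using cp by (metis mult_cancel_left pCons_eq_0_iff zero_neq_one)
  from Cons.IH[OF B this]
  obtain P where P: "P \<in> carrier_mat m m" "transpose_mat P * P = 1\<^sub>m m"
    and BP: "B * P = P * mat_diag m ((!) es)" by blast
  define Q where "Q = four_block_mat (1\<^sub>m 1) (0\<^sub>m 1 m) (0\<^sub>m m 1) P"
  have Q: "Q \<in> carrier_mat n n" unfolding Q_def n using P by auto
  have Q_orth: "transpose_mat Q * Q = 1\<^sub>m n"
    unfolding Q_def n by (rule orthogonal_four_block_mat_one[OF P])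
  have WAWQ: "transpose_mat W * A * W * Q = Q * mat_diag n ((!) (e # es))"
    unfolding WAW Q_def n by (rule four_block_mat_diagonalization_step[OF B(1) P(1) BP])
  show ?case
  proof (intro bexI conjI)
    show "W * Q \<in> carrier_mat n n" using W Q by simp
    show "transpose_mat (W * Q) * (W * Q) = 1\<^sub>m n"
      using W W_orth Q Q_orth by (rule orthogonal_mat_mult)
    show "A * (W * Q) = W * Q * mat_diag n ((!) (e # es))"
      by (rule mult_orthogonal_conj[OF A W W_orth' Q WAWQ mat_diag_dim])
  qed
qed

lemma eigenvalue_real_symmetric_mat_real:
  fixes A :: "real mat"
  assumes A: "A \<in> carrier_mat n n" and sym: "transpose_mat A = A"
    and ev: "eigenvalue (map_mat complex_of_real A) a"
  shows "a \<in> \<real>"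
proof -
  let ?C = "map_mat complex_of_real A"
  have C: "?C \<in> carrier_mat n n" using A by simp
  from ev obtain v where v: "v \<in> carrier_vec n" "v \<noteq> 0\<^sub>v n" and Cv: "?C *\<^sub>v v = a \<cdot>\<^sub>v v"
    unfolding eigenvalue_def eigenvector_def using A by auto
  have "?C *\<^sub>v conjugate v = conjugate (?C *\<^sub>v v)"
    using A v by (intro eq_vecI) (auto simp: scalar_prod_def sum_conjugate)
  then have C_conj: "?C *\<^sub>v conjugate v = cnj a \<cdot>\<^sub>v conjugate v"
    unfolding Cv by (simp add: conjugate_smult_vec)
  have "a * (v \<bullet>c v) = (?C *\<^sub>v v) \<bullet> conjugate v" using v by (simp add: Cv)
  also have "\<dots> = (transpose_mat ?C *\<^sub>v v) \<bullet> conjugate v" using sym by (simp add: map_mat_transpose)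
  also have "\<dots> = v \<bullet> (?C *\<^sub>v conjugate v)" using C v by (simp add: transpose_vec_mult_scalar)
  also have "\<dots> = cnj a * (v \<bullet>c v)" using v by (simp add: C_conj)
  finally have "cnj a = a" using v by simp
  then show ?thesis by (simp add: Reals_cnj_iff)
qed

lemma char_poly_real_symmetric_mat_splits:
  fixes A :: "real mat"
  assumes A: "A \<in> carrier_mat n n" and sym: "transpose_mat A = A"
  obtains es where "char_poly A = (\<Prod>e\<leftarrow>es. [:-e, 1:])"
proof -
  let ?C = "map_mat complex_of_real A"
  have C: "?C \<in> carrier_mat n n" using A by simp
  obtain as where C_split: "char_poly ?C = (\<Prod>a\<leftarrow>as. [:-a, 1:])"
    using char_poly_factorized[OF C] by auto
  have as_real: "a = of_real (Re a)" if "a \<in> set as" for a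
  proof -
    have "poly (char_poly ?C) a = 0" unfolding C_split using that by (rule linear_poly_root)
    then have "a \<in> \<real>"
      by (intro eigenvalue_real_symmetric_mat_real[OF A sym])
        (simp add: eigenvalue_root_char_poly[OF C])
    then show ?thesis by (simp add: complex_is_Real_iff)
  qed
  interpret of_real_poly: map_poly_inj_comm_ring_hom "of_real :: real \<Rightarrow> complex" ..
  have "map_poly of_real (char_poly A) = (\<Prod>a\<leftarrow>as. [:-a, 1:])"
    using C_split of_real_hom.char_poly_hom[OF A] by metis
  also have "\<dots> = (\<Prod>r\<leftarrow>map Re as. map_poly of_real [:-r, 1:])"
    unfolding map_map o_def by (intro arg_cong[where f = prod_list] map_cong) (use as_real in auto)
  also have "\<dots> = map_poly of_real (\<Prod>r\<leftarrow>map Re as. [:-r, 1:])"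
    by (simp add: of_real_poly.hom_prod_list map_map o_def)
  finally have "char_poly A = (\<Prod>r\<leftarrow>map Re as. [:-r, 1:])" by simp
  then show thesis by (rule that)
qed

lemma proots_prod_linear_factors: "proots (\<Prod>r\<leftarrow>rs. [:-r, 1:]) = mset (rs :: 'a :: idom list)"
proof (induction rs)
  case (Cons r rs)
  have "(\<Prod>r\<leftarrow>rs. [:-r, 1:]) \<noteq> (0 :: 'a poly)"
    using monic_prod_list[of "map (\<lambda>r. [:-r, 1:]) rs"] by (auto simp: o_def)
  then have "proots ([:-r, 1:] * (\<Prod>r\<leftarrow>rs. [:-r, 1:])) = proots [:-r, 1:] + proots (\<Prod>r\<leftarrow>rs. [:-r, 1:])"
    by (intro proots_mult) auto
  then show ?case using Cons.IH by simp
qed simp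

lemma char_poly_sorted_eigenvalues:
  fixes A :: "real mat"
  assumes A: "A \<in> carrier_mat n n" and sym: "transpose_mat A = A"
  shows "char_poly A = (\<Prod>e\<leftarrow>sorted_eigenvalues A. [:-e, 1:])"
proof -
  obtain rs where rs: "char_poly A = (\<Prod>e\<leftarrow>rs. [:-e, 1:])"
    using char_poly_real_symmetric_mat_splits[OF A sym] .
  have "sorted_eigenvalues A = sort rs"
    unfolding sorted_eigenvalues_def rs proots_prod_linear_factors
    by (simp add: sorted_list_of_multiset_mset)
  moreover have "(\<Prod>e\<leftarrow>sort rs. [:-e, 1:]) = (\<Prod>e\<leftarrow>rs. [:-e, 1:])"
    by (simp flip: prod_mset_prod_list)
  ultimately show ?thesis using rs by simp
qed

lemma length_sorted_eigenvalues:
  fixes A :: "real mat"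
  assumes A: "A \<in> carrier_mat n n" and sym: "transpose_mat A = A"
  shows "length (sorted_eigenvalues A) = n"
  using degree_monic_char_poly[OF A] degree_linear_factors[of uminus "sorted_eigenvalues A"]
  unfolding char_poly_sorted_eigenvalues[OF A sym] by simp

lemma sorted_eigenvalues_spectral_decomposition:
  fixes A :: "real mat"
  assumes A: "A \<in> carrier_mat n n" and sym: "transpose_mat A = A"
  obtains P where "P \<in> carrier_mat n n" "transpose_mat P * P = 1\<^sub>m n" "P * transpose_mat P = 1\<^sub>m n"
    "A = P * mat_diag n ((!) (sorted_eigenvalues A)) * transpose_mat P"
proof -
  let ?D = "mat_diag n ((!) (sorted_eigenvalues A))"
  obtain P where P: "P \<in> carrier_mat n n" and P_orth: "transpose_mat P * P = 1\<^sub>m n"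
    and AP: "A * P = P * ?D"
    using real_symmetric_mat_diagonalization[OF A sym char_poly_sorted_eigenvalues[OF A sym]]
    by blast
  have P_orth': "P * transpose_mat P = 1\<^sub>m n"
    using mat_mult_left_right_inverse[OF _ P P_orth] P by auto
  have "A = A * (P * transpose_mat P)" using A P_orth' by simp
  also have "\<dots> = A * P * transpose_mat P" using A P by (simp add: assoc_mult_mat[of _ n n _ n _ n])
  also have "\<dots> = P * ?D * transpose_mat P" unfolding AP ..
  finally show thesis using that P P_orth P_orth' by blast
qed

section \<open>Sums of smallest eigenvalues and partitions\<close>

lemma orthogonal_mat_cols_orthonormal:
  fixes P :: "'a :: comm_ring_1 mat"
  assumes P: "P \<in> carrier_mat n n" and orth: "transpose_mat P * P = 1\<^sub>m n"
    and i: "i < n" and j: "j < n"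
  shows "(\<Sum>u<n. P $$ (u, i) * P $$ (u, j)) = (if i = j then 1 else 0)"
proof -
  have "(transpose_mat P * P) $$ (i, j) = (\<Sum>u<n. P $$ (u, i) * P $$ (u, j))"
    using P i j by (simp add: scalar_prod_def lessThan_atLeast0)
  then show ?thesis using orth i j by simp
qed

lemma orthogonal_mat_rows_orthonormal:
  fixes P :: "'a :: comm_ring_1 mat"
  assumes P: "P \<in> carrier_mat n n" and orth: "P * transpose_mat P = 1\<^sub>m n"
    and u: "u < n" and v: "v < n"
  shows "(\<Sum>i<n. P $$ (u, i) * P $$ (v, i)) = (if u = v then 1 else 0)"
proof -
  have "(P * transpose_mat P) $$ (u, v) = (\<Sum>i<n. P $$ (u, i) * P $$ (v, i))"
    using P u v by (simp add: scalar_prod_def lessThan_atLeast0)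
  then show ?thesis using orth u v by simp
qed

lemma index_mat_diag_conj:
  fixes P :: "'a :: comm_ring_1 mat"
  assumes P: "P \<in> carrier_mat n n" and u: "u < n" and v: "v < n"
  shows "(P * mat_diag n d * transpose_mat P) $$ (u, v) = (\<Sum>i<n. P $$ (u, i) * d i * P $$ (v, i))"
  using P u v by (simp add: mat_diag_mult_right scalar_prod_def lessThan_atLeast0)

lemma indicator_form_mat_diag_conj:
  fixes P :: "'a :: comm_ring_1 mat"
  assumes P: "P \<in> carrier_mat n n" and S: "S \<subseteq> {..<n}"
  shows "(\<Sum>u\<in>S. \<Sum>v\<in>S. (P * mat_diag n d * transpose_mat P) $$ (u, v))
       = (\<Sum>i<n. d i * (\<Sum>u\<in>S. P $$ (u, i))\<^sup>2)"
proof -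
  have "(\<Sum>u\<in>S. \<Sum>v\<in>S. (P * mat_diag n d * transpose_mat P) $$ (u, v))
      = (\<Sum>u\<in>S. \<Sum>v\<in>S. \<Sum>i<n. d i * (P $$ (u, i) * P $$ (v, i)))"
    by (intro sum.cong refl) (auto simp: index_mat_diag_conj[OF P] ac_simps dest!: subsetD[OF S])
  also have "\<dots> = (\<Sum>i<n. d i * (\<Sum>u\<in>S. \<Sum>v\<in>S. P $$ (u, i) * P $$ (v, i)))"
    by (simp add: sum_distrib_left sum.swap[where B = "{..<n}"])
  also have "\<dots> = (\<Sum>i<n. d i * (\<Sum>u\<in>S. P $$ (u, i))\<^sup>2)"
    by (simp add: power2_eq_square sum_product)
  finally show ?thesis .
qed

lemma sum_squares_indicator_coeffs:
  fixes P :: "'a :: comm_ring_1 mat"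
  assumes P: "P \<in> carrier_mat n n" and orth: "P * transpose_mat P = 1\<^sub>m n" and S: "S \<subseteq> {..<n}"
  shows "(\<Sum>i<n. (\<Sum>u\<in>S. P $$ (u, i))\<^sup>2) = of_nat (card S)"
proof -
  have "(\<Sum>i<n. (\<Sum>u\<in>S. P $$ (u, i))\<^sup>2) = (\<Sum>u\<in>S. \<Sum>v\<in>S. \<Sum>i<n. P $$ (u, i) * P $$ (v, i))"
    by (simp add: power2_eq_square sum_product sum.swap[where A = "{..<n}"])
  also have "\<dots> = (\<Sum>u\<in>S. \<Sum>v\<in>S. if u = v then 1 else 0)"
    by (intro sum.cong refl)
      (auto simp: orthogonal_mat_rows_orthonormal[OF P orth] dest!: subsetD[OF S])
  also have "\<dots> = of_nat (card S)" using finite_subset[OF S] by simp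
  finally show ?thesis .
qed

lemma sum_smallest_le_weighted_sum:
  fixes lam c :: "nat \<Rightarrow> real"
  assumes lam_mono: "\<And>i j. i \<le> j \<Longrightarrow> j < n \<Longrightarrow> lam i \<le> lam j"
    and c_nonneg: "\<And>i. i < n \<Longrightarrow> 0 \<le> c i" and c_le_1: "\<And>i. i < n \<Longrightarrow> c i \<le> 1"
    and c_sum: "(\<Sum>i<n. c i) = real k" and k: "k \<le> n"
  shows "(\<Sum>i<k. lam i) \<le> (\<Sum>i<n. lam i * c i)"
proof -
  let ?l = "lam (k - 1)"
  have split: "(\<Sum>i<n. f i) = (\<Sum>i<k. f i) + (\<Sum>i\<in>{k..<n}. f i)" for f :: "nat \<Rightarrow> real"
    using k by (metis atLeast0LessThan sum.atLeastLessThan_concat zero_le)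
  \<comment> \<open>Compare both sides with the threshold \<open>lam (k - 1)\<close>.\<close>
  have "(\<Sum>i<k. ?l * (c i - 1)) \<le> (\<Sum>i<k. lam i * (c i - 1))"
    using lam_mono k c_le_1 by (intro sum_mono mult_right_mono_neg) auto
  moreover have "(\<Sum>i\<in>{k..<n}. ?l * c i) \<le> (\<Sum>i\<in>{k..<n}. lam i * c i)"
    using lam_mono c_nonneg by (intro sum_mono mult_right_mono) auto
  moreover have "(\<Sum>i<k. ?l * (c i - 1)) + (\<Sum>i\<in>{k..<n}. ?l * c i) = ?l * ((\<Sum>i<n. c i) - real k)"
    using split[of c] by (simp add: sum_subtractf algebra_simps sum_distrib_right)
  moreover have "(\<Sum>i<n. lam i * c i) - (\<Sum>i<k. lam i)
      = (\<Sum>i<k. lam i * (c i - 1)) + (\<Sum>i\<in>{k..<n}. lam i * c i)"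
    using split[of "\<lambda>i. lam i * c i"] by (simp add: algebra_simps sum_subtractf)
  moreover have "?l * ((\<Sum>i<n. c i) - real k) = 0" using c_sum by simp
  ultimately show ?thesis by linarith
qed

lemma indicator_coeff_weights_le_one:
  fixes P :: "real mat" and S :: "nat \<Rightarrow> nat set"
  assumes P: "P \<in> carrier_mat n n" and orth: "transpose_mat P * P = 1\<^sub>m n"
    and disj: "\<And>j j'. j < k \<Longrightarrow> j' < k \<Longrightarrow> j \<noteq> j' \<Longrightarrow> S j \<inter> S j' = {}"
    and cover: "(\<Union>j<k. S j) = {..<n}" and i: "i < n"
  shows "(\<Sum>j<k. (\<Sum>u\<in>S j. P $$ (u, i))\<^sup>2 / card (S j)) \<le> 1"
proof -
  have fin: "finite (S j)" if "j < k" for j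
    using cover that by (metis UN_I finite_lessThan finite_subset lessThan_iff subsetI)
  have "(\<Sum>j<k. (\<Sum>u\<in>S j. P $$ (u, i))\<^sup>2 / card (S j)) \<le> (\<Sum>j<k. \<Sum>u\<in>S j. (P $$ (u, i))\<^sup>2)"
    using sum_squared_le_sum_of_squares[of "\<lambda>u. P $$ (u, i)"]
    by (intro sum_mono) (simp add: divide_le_eq sum_nonneg)
  also have "\<dots> = (\<Sum>u\<in>(\<Union>j<k. S j). (P $$ (u, i))\<^sup>2)"
    by (rule sum.UNION_disjoint[symmetric]) (auto simp: fin disj)
  also have "\<dots> = (\<Sum>u<n. (P $$ (u, i))\<^sup>2)" unfolding cover ..
  also have "\<dots> = 1"
    using orthogonal_mat_cols_orthonormal[OF P orth i i] by (simp add: power2_eq_square)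
  finally show ?thesis .
qed

lemma sum_indicator_coeff_weights:
  fixes P :: "real mat" and S :: "nat \<Rightarrow> nat set"
  assumes P: "P \<in> carrier_mat n n" and orth: "P * transpose_mat P = 1\<^sub>m n"
    and S: "\<And>j. j < k \<Longrightarrow> S j \<subseteq> {..<n}" "\<And>j. j < k \<Longrightarrow> S j \<noteq> {}"
  shows "(\<Sum>i<n. \<Sum>j<k. (\<Sum>u\<in>S j. P $$ (u, i))\<^sup>2 / card (S j)) = real k"
proof -
  have "(\<Sum>i<n. \<Sum>j<k. (\<Sum>u\<in>S j. P $$ (u, i))\<^sup>2 / card (S j))
      = (\<Sum>j<k. (\<Sum>i<n. (\<Sum>u\<in>S j. P $$ (u, i))\<^sup>2) / card (S j))"
    by (subst sum.swap) (simp add: sum_divide_distrib)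
  also have "\<dots> = (\<Sum>j<k. 1)"
    using sum_squares_indicator_coeffs[OF P orth S(1)] S finite_subset[OF S(1)]
    by (intro sum.cong refl) (simp add: card_gt_0_iff)
  finally show ?thesis by simp
qed

lemma sum_smallest_eigenvalues_partition_bound:
  fixes P :: "real mat" and lam :: "nat \<Rightarrow> real" and S :: "nat \<Rightarrow> nat set"
  assumes P: "P \<in> carrier_mat n n"
    and P_orth: "transpose_mat P * P = 1\<^sub>m n" "P * transpose_mat P = 1\<^sub>m n"
    and A: "A = P * mat_diag n lam * transpose_mat P"
    and lam_mono: "\<And>i j. i \<le> j \<Longrightarrow> j < n \<Longrightarrow> lam i \<le> lam j"
    and disj: "\<And>j j'. j < k \<Longrightarrow> j' < k \<Longrightarrow> j \<noteq> j' \<Longrightarrow> S j \<inter> S j' = {}"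
    and cover: "(\<Union>j<k. S j) = {..<n}" and k: "k \<le> n"
    and card_S: "\<And>j. j < k \<Longrightarrow> m \<le> card (S j)" and m: "0 < m"
    and forms_nonneg: "\<And>j. j < k \<Longrightarrow> 0 \<le> (\<Sum>u\<in>S j. \<Sum>v\<in>S j. A $$ (u, v))"
  shows "real m * (\<Sum>i<k. lam i) \<le> (\<Sum>j<k. \<Sum>u\<in>S j. \<Sum>v\<in>S j. A $$ (u, v))"
proof -
  define Q where "Q j = (\<Sum>u\<in>S j. \<Sum>v\<in>S j. A $$ (u, v))" for j
  define y where "y j i = (\<Sum>u\<in>S j. P $$ (u, i))" for j i
  \<comment> \<open>The weight of the \<open>i\<close>-th eigenvector in the normalized indicator vectors of the parts.\<close>
  define c where "c i = (\<Sum>j<k. (y j i)\<^sup>2 / card (S j))" for i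
  have S_sub: "S j \<subseteq> {..<n}" if "j < k" for j using cover that by blast
  have card_pos: "0 < real (card (S j))" if "j < k" for j using card_S[OF that] m by simp
  have S_ne: "S j \<noteq> {}" if "j < k" for j using card_S[OF that] m by auto
  have Q_y: "Q j = (\<Sum>i<n. lam i * (y j i)\<^sup>2)" if "j < k" for j
    unfolding Q_def y_def A using indicator_form_mat_diag_conj[OF P S_sub[OF that]] .
  have c_sum: "(\<Sum>i<n. c i) = real k"
    unfolding c_def y_def using sum_indicator_coeff_weights[OF P P_orth(2) S_sub S_ne] .
  have "(\<Sum>i<k. lam i) \<le> (\<Sum>i<n. lam i * c i)"
  proof (rule sum_smallest_le_weighted_sum[OF lam_mono _ _ c_sum k])
    show "0 \<le> c i" for i unfolding c_def by (intro sum_nonneg divide_nonneg_nonneg) auto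
    show "c i \<le> 1" if "i < n" for i
      unfolding c_def y_def using indicator_coeff_weights_le_one[OF P P_orth(1) disj cover that] .
  qed
  also have "(\<Sum>i<n. lam i * c i) = (\<Sum>j<k. Q j / card (S j))"
    unfolding c_def
    by (simp add: Q_y sum_distrib_left sum_divide_distrib sum.swap[where A = "{..<n}"] mult_ac)
  finally have "real m * (\<Sum>i<k. lam i) \<le> real m * (\<Sum>j<k. Q j / card (S j))"
    by (simp add: mult_left_mono)
  also have "\<dots> = (\<Sum>j<k. real m * (Q j / card (S j)))" by (rule sum_distrib_left)
  also have "\<dots> \<le> (\<Sum>j<k. Q j)"
  proof (rule sum_mono)
    fix j assume "j \<in> {..<k}"
    then have "real m * Q j \<le> card (S j) * Q j" and "j < k"
      using card_S forms_nonneg unfolding Q_def by (auto intro: mult_right_mono)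
    then show "real m * (Q j / card (S j)) \<le> Q j"
      using card_pos by (simp add: divide_le_eq mult.commute)
  qed
  finally show ?thesis unfolding Q_def .
qed

section \<open>Cuts and the weighted Laplacian\<close>

definition out_weight :: "nat rel \<Rightarrow> nat \<Rightarrow> nat \<Rightarrow> real" where
  "out_weight E u v = (if (u, v) \<in> E then 1 / real (dout E u) else 0)"

lemma wadj_eq_out_weight: "wadj E u v = out_weight E u v + out_weight E v u"
  unfolding wadj_def out_weight_def ..

lemma wadj_nonneg: "0 \<le> wadj E u v"
  unfolding wadj_def by simp

lemma wadj_sym: "wadj E u v = wadj E v u"
  unfolding wadj_def by simp

lemma sum_out_weight_le_of_bool:
  assumes V: "finite V"
  shows "(\<Sum>y\<in>V. out_weight E x y) \<le> of_bool (\<exists>y\<in>V. (x, y) \<in> E)"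
proof -
  have sum_eq: "(\<Sum>y\<in>V. out_weight E x y) = real (card {y\<in>V. (x, y) \<in> E}) / real (dout E x)"
    using sum.inter_filter[OF V, of "\<lambda>_. 1 / real (dout E x)" "\<lambda>y. (x, y) \<in> E"]
    by (simp add: out_weight_def)
  have le_1: "real (card {y\<in>V. (x, y) \<in> E}) / real (dout E x) \<le> 1"
  \<comment> \<open>\<open>dout E x = 0\<close> also when \<open>x\<close> has infinitely many successors; then all weights vanish.\<close>
  proof (cases "dout E x = 0")
    case False
    then have "finite {y. (x, y) \<in> E}" unfolding dout_def by (meson card.infinite)
    then have "card {y\<in>V. (x, y) \<in> E} \<le> dout E x" unfolding dout_def by (rule card_mono) auto
    with False show ?thesis by simp
  qed simp
  show ?thesis
  proof (cases "\<exists>y\<in>V. (x, y) \<in> E")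
    case False
    then have "{y\<in>V. (x, y) \<in> E} = {}" by auto
    then show ?thesis unfolding sum_eq by (simp only: card.empty) simp
  qed (simp add: sum_eq le_1)
qed

lemma laplacian_carrier_mat: "laplacian n E \<in> carrier_mat n n"
  unfolding laplacian_def by simp

lemma transpose_laplacian: "transpose_mat (laplacian n E) = laplacian n E"
  by (rule eq_matI) (auto simp: laplacian_def wadj_sym)

lemma laplacian_indicator_form:
  assumes S: "S \<subseteq> {..<n}"
  shows "(\<Sum>u\<in>S. \<Sum>v\<in>S. laplacian n E $$ (u, v)) = (\<Sum>u\<in>S. \<Sum>v\<in>{..<n} - S. wadj E u v)"
proof (rule sum.cong[OF refl])
  fix u assume u: "u \<in> S"
  have "(\<Sum>v\<in>S. laplacian n E $$ (u, v)) = (\<Sum>v\<in>S. of_bool (u = v) * wdeg n E u - wadj E u v)"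
    using u by (intro sum.cong refl) (auto simp: laplacian_def dest!: subsetD[OF S])
  also have "\<dots> = wdeg n E u - (\<Sum>v\<in>S. wadj E u v)"
    using u finite_subset[OF S] by (simp add: sum_subtractf)
  also have "wdeg n E u = (\<Sum>v\<in>S. wadj E u v) + (\<Sum>v\<in>{..<n} - S. wadj E u v)"
    unfolding wdeg_def using S by (metis add.commute finite_lessThan sum.subset_diff)
  finally show "(\<Sum>v\<in>S. laplacian n E $$ (u, v)) = (\<Sum>v\<in>{..<n} - S. wadj E u v)" by simp
qed

definition out_boundary :: "nat rel \<Rightarrow> nat \<Rightarrow> nat set \<Rightarrow> nat set" where
  "out_boundary E n S = {u\<in>S. \<exists>v\<in>{..<n} - S. (u, v) \<in> E}"

definition in_boundary :: "nat rel \<Rightarrow> nat \<Rightarrow> nat set \<Rightarrow> nat set" where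
  "in_boundary E n S = {v\<in>{..<n} - S. \<exists>u\<in>S. (v, u) \<in> E}"

lemma cut_weight_le_boundary:
  assumes S: "S \<subseteq> {..<n}"
  shows "(\<Sum>u\<in>S. \<Sum>v\<in>{..<n} - S. wadj E u v) \<le> card (out_boundary E n S) + card (in_boundary E n S)"
proof -
  have finS: "finite S" using finite_subset[OF S] by simp
  have "(\<Sum>u\<in>S. \<Sum>v\<in>{..<n} - S. wadj E u v)
      = (\<Sum>u\<in>S. \<Sum>v\<in>{..<n} - S. out_weight E u v) + (\<Sum>v\<in>{..<n} - S. \<Sum>u\<in>S. out_weight E v u)"
    unfolding wadj_eq_out_weight sum.distrib by (simp add: sum.swap[where A = S])
  also have "\<dots> \<le> (\<Sum>u\<in>S. of_bool (\<exists>v\<in>{..<n} - S. (u, v) \<in> E))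
      + (\<Sum>v\<in>{..<n} - S. of_bool (\<exists>u\<in>S. (v, u) \<in> E))"
    by (intro add_mono sum_mono sum_out_weight_le_of_bool finS) simp
  also have "\<dots> = card (out_boundary E n S) + card (in_boundary E n S)"
    using finS by (simp add: out_boundary_def in_boundary_def Int_def conj_commute)
  finally show ?thesis .
qed

section \<open>Balanced partitions into time intervals\<close>

lemma strict_sorted_nth_le_iff:
  fixes xs :: "'a :: linorder list"
  assumes "sorted_wrt (<) xs" and "i < length xs" and "j < length xs"
  shows "xs ! i \<le> xs ! j \<longleftrightarrow> i \<le> j"
  using sorted_wrt_nth_less[OF assms(1), of i j] sorted_wrt_nth_less[OF assms(1), of j i] assms(2,3)
  by (cases i j rule: linorder_cases) auto

lemma strict_sorted_block_thresholds:
  fixes xs :: "nat list"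
  assumes xs: "sorted_wrt (<) xs" "set xs \<subseteq> {..<T}" and km: "k * m \<le> length xs"
    and j: "j < k" and p: "p < length xs"
  defines "sig \<equiv> \<lambda>j. if j < k then xs ! (j * m) else T"
  shows "sig j \<le> xs ! p \<longleftrightarrow> j * m \<le> p"
    and "xs ! p < sig (Suc j) \<longleftrightarrow> (Suc j < k \<longrightarrow> p < Suc j * m)"
proof -
  have block_le: "Suc i * m \<le> length xs" if "i < k" for i
    using that km by (meson Suc_leI mult_le_mono1 order_trans)
  have le_iff: "sig i \<le> xs ! p \<longleftrightarrow> i * m \<le> p" if "i < k" for i
    using block_le[OF that] that p strict_sorted_nth_le_iff[OF xs(1), of "i * m" p]
    by (cases "m = 0") (auto simp: sig_def dest: gr_implies_not0)
  show "sig j \<le> xs ! p \<longleftrightarrow> j * m \<le> p" using le_iff[OF j] .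
  have "xs ! p < T" using xs(2) nth_mem[OF p] by auto
  then show "xs ! p < sig (Suc j) \<longleftrightarrow> (Suc j < k \<longrightarrow> p < Suc j * m)"
    using le_iff[of "Suc j"] by (auto simp: sig_def not_le)
qed

lemma balanced_interval_partition:
  fixes X :: "nat set"
  assumes X: "finite X" "X \<subseteq> {..<T}" and k: "0 < k" "k \<le> card X"
  obtains sig :: "nat \<Rightarrow> nat" where "mono sig" "sig k = T"
    "\<And>x. x \<in> X \<Longrightarrow> \<exists>j<k. sig j \<le> x \<and> x < sig (Suc j)"
    "\<And>j. j < k \<Longrightarrow> card X div k \<le> card {x\<in>X. sig j \<le> x \<and> x < sig (Suc j)}"
proof -
  define xs where "xs = sorted_list_of_set X"
  define m where "m = card X div k"
  define sig where "sig j = (if j < k then xs ! (j * m) else T)" for j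
  have xs: "sorted_wrt (<) xs" "distinct xs" "set xs = X" "length xs = card X"
    using X(1) by (simp_all add: xs_def)
  have m: "0 < m" using k by (simp add: m_def div_greater_zero_iff)
  have km: "k * m \<le> length xs" unfolding m_def xs(4) by (rule times_div_less_eq_dividend)
  have block_le: "Suc j * m \<le> card X" if "j < k" for j
    using that km xs(4) by (metis Suc_leI mult_le_mono1 order_trans)
  have nth_less_T: "xs ! p < T" if "p < card X" for p
    using X(2) nth_mem[of p xs] that xs(3,4) by auto
  note thresholds = strict_sorted_block_thresholds[OF xs(1) X(2)[folded xs(3)] km, folded sig_def]
  note sig_le_iff = thresholds(1)[unfolded xs(4)] and less_sig_iff = thresholds(2)[unfolded xs(4)]
  show thesis
  proof
    show "mono sig"
    proof
      fix i j :: nat assume "i \<le> j"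
      then show "sig i \<le> sig j"
        using sig_le_iff[of i "j * m"] block_le[of j] m nth_less_T[of "i * m"] block_le[of i]
        by (auto simp: sig_def)
    qed
    show "sig k = T" by (simp add: sig_def)
  next
    fix x assume "x \<in> X"
    then obtain p where p: "p < card X" "x = xs ! p" using xs(3,4) by (metis in_set_conv_nth)
    define j where "j = min (p div m) (k - 1)"
    have "j < k" "j * m \<le> p" "Suc j < k \<longrightarrow> p < Suc j * m"
      using k(1) m by (auto simp: j_def min_def div_le_mono2 dividend_less_div_times
        less_eq_div_iff_mult_less_eq[symmetric] div_less_iff_less_mult[symmetric])
    then show "\<exists>j<k. sig j \<le> x \<and> x < sig (Suc j)"
      using sig_le_iff less_sig_iff p by blast
  next
    fix j assume j: "j < k"
    have "card X div k = card {j * m..<Suc j * m}" by (simp add: m_def)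
    also have "\<dots> = card ((!) xs ` {j * m..<Suc j * m})"
      using block_le[OF j] xs(2,4) by (intro card_image[symmetric] inj_on_nth) auto
    also have "\<dots> \<le> card {x\<in>X. sig j \<le> x \<and> x < sig (Suc j)}"
    proof (intro card_mono)
      show "finite {x\<in>X. sig j \<le> x \<and> x < sig (Suc j)}" using X(1) by simp
      show "(!) xs ` {j * m..<Suc j * m} \<subseteq> {x\<in>X. sig j \<le> x \<and> x < sig (Suc j)}"
        using block_le[OF j] sig_le_iff[OF j] less_sig_iff[OF j] xs(3,4) by auto
    qed
    finally show "card X div k \<le> card {x\<in>X. sig j \<le> x \<and> x < sig (Suc j)}" .
  qed
qed

lemma mono_intervals_disjoint:
  fixes sig :: "nat \<Rightarrow> 'a :: linorder"
  assumes "mono sig" "i \<noteq> j"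
  shows "{x. sig i \<le> x \<and> x < sig (Suc i)} \<inter> {x. sig j \<le> x \<and> x < sig (Suc j)} = {}"
proof -
  have "sig (Suc i) \<le> sig j \<or> sig (Suc j) \<le> sig i"
    using assms by (cases i j rule: linorder_cases) (auto intro: monoD)
  then show ?thesis by auto
qed

section \<open>Evaluations\<close>

lemma run_append:
  "run n E M (xs @ ys) s = (case run n E M xs s of None \<Rightarrow> None | Some s' \<Rightarrow> run n E M ys s')"
  by (induction xs arbitrary: s) (auto split: option.split)

lemma step_SomeD:
  assumes "step n E M m (R, B, C) = Some (R', B', C')"
  shows step_fast_new: "\<And>v. v \<in> R' \<Longrightarrow> v \<notin> R \<Longrightarrow> m = Load v \<or> m = Compute v"
    and step_slow_new: "\<And>v. v \<in> B' \<Longrightarrow> v \<notin> B \<Longrightarrow> m = Store v"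
    and step_computed: "C' = (case m of Compute v \<Rightarrow> insert v C | _ \<Rightarrow> C)"
    and step_fast_card: "finite R \<Longrightarrow> card R \<le> M \<Longrightarrow> finite R' \<and> card R' \<le> M"
    and step_subset_computed: "R \<subseteq> C \<Longrightarrow> B \<subseteq> C \<Longrightarrow> R' \<subseteq> C' \<and> B' \<subseteq> C'"
    and step_Compute:
      "\<And>v. m = Compute v \<Longrightarrow> v \<notin> C \<and> v < n \<and> (\<forall>u. (u, v) \<in> E \<longrightarrow> u \<in> R)"
    and step_Load: "\<And>v. m = Load v \<Longrightarrow> v \<in> B"
  using assms by (cases m; auto split: if_splits intro: card_Diff1_le[THEN le_trans])+

definition is_load :: "move \<Rightarrow> bool" where
  "is_load m \<longleftrightarrow> (\<exists>v. m = Load v)"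

definition is_store :: "move \<Rightarrow> bool" where
  "is_store m \<longleftrightarrow> (\<exists>v. m = Store v)"

fun move_vertex :: "move \<Rightarrow> nat" where
  "move_vertex (Load v) = v"
| "move_vertex (Store v) = v"
| "move_vertex (Evict v) = v"
| "move_vertex (Compute v) = v"

locale evaluation =
  fixes n :: nat and E :: "nat rel" and M :: nat and ms :: "move list"
  assumes valid: "valid_evaluation n E M ms"
begin

definition state_at :: "nat \<Rightarrow> state" where
  "state_at t = the (run n E M (take t ms) ({}, {}, {}))"

definition fast :: "nat \<Rightarrow> nat set" where "fast t = fst (state_at t)"
definition slow :: "nat \<Rightarrow> nat set" where "slow t = fst (snd (state_at t))"
definition computed :: "nat \<Rightarrow> nat set" where "computed t = snd (snd (state_at t))"

definition load_times :: "nat \<Rightarrow> nat \<Rightarrow> nat set" where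
  "load_times a b = {t. t < length ms \<and> a \<le> t \<and> t < b \<and> is_load (ms ! t)}"

definition store_times :: "nat set" where
  "store_times = {t. t < length ms \<and> is_store (ms ! t)}"

abbreviation vertex_at :: "nat \<Rightarrow> nat" where
  "vertex_at t \<equiv> move_vertex (ms ! t)"

lemma io_cost_eq: "io_cost ms = card (load_times 0 (length ms)) + card store_times"
proof -
  have "io_cost ms = card {t. t < length ms \<and> is_io (ms ! t)}"
    unfolding io_cost_def by (rule length_filter_conv_card)
  also have "{t. t < length ms \<and> is_io (ms ! t)} = load_times 0 (length ms) \<union> store_times"
    by (auto simp: load_times_def store_times_def is_load_def is_store_def elim: is_io.elims)
  also have "card \<dots> = card (load_times 0 (length ms)) + card store_times"
    by (rule card_Un_disjoint) (auto simp: load_times_def store_times_def is_load_def is_store_def)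
  finally show ?thesis .
qed

lemma state_at_eq: "state_at t = (fast t, slow t, computed t)"
  by (simp add: fast_def slow_def computed_def)

lemma run_take: "t \<le> length ms \<Longrightarrow> run n E M (take t ms) ({}, {}, {}) = Some (state_at t)"
  using valid unfolding valid_evaluation_def state_at_def
  by (metis append_take_drop_id option.case_eq_if option.collapse option.simps(3) run_append)

lemma step_at:
  assumes "t < length ms"
  shows "step n E M (ms ! t) (fast t, slow t, computed t)
    = Some (fast (Suc t), slow (Suc t), computed (Suc t))"
proof -
  have "run n E M (take (Suc t) ms) ({}, {}, {})
      = (case step n E M (ms ! t) (state_at t) of None \<Rightarrow> None | Some s \<Rightarrow> Some s)"
    using assms run_take[of t] by (simp add: take_Suc_conv_app_nth run_append split: option.split)
  then show ?thesis using run_take[of "Suc t"] assms by (simp add: state_at_eq split: option.splits)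
qed

lemma state_at_0: "fast 0 = {}" "slow 0 = {}" "computed 0 = {}"
  using run_take[of 0] state_at_eq[of 0] by simp_all

lemma computed_final: "computed (length ms) = {0..<n}"
  using valid run_take[of "length ms"] unfolding valid_evaluation_def by (auto simp: computed_def)

lemma state_invariant:
  "t \<le> length ms \<Longrightarrow>
    finite (fast t) \<and> card (fast t) \<le> M \<and> fast t \<subseteq> computed t \<and> slow t \<subseteq> computed t"
proof (induction t)
  case (Suc t)
  then show ?case using step_fast_card[OF step_at] step_subset_computed[OF step_at] by simp
qed (simp add: state_at_0)

lemma computed_eq: "t \<le> length ms \<Longrightarrow> computed t = {v. \<exists>\<tau><t. ms ! \<tau> = Compute v}"
proof (induction t)
  case (Suc t)
  then show ?case
    using step_computed[OF step_at[of t]] by (cases "ms ! t") (auto simp: less_Suc_eq)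
qed (simp add: state_at_0)

lemma Compute_unique:
  assumes "t < length ms" "t' < length ms" "ms ! t = Compute v" "ms ! t' = Compute v"
  shows "t = t'"
proof (rule ccontr)
  assume "t \<noteq> t'"
  then consider "t < t'" | "t' < t" by linarith
  then show False
    by cases (use assms computed_eq step_Compute[OF step_at] in \<open>fastforce+\<close>)
qed

lemma fast_entered_by_Load_or_Compute:
  assumes "t \<le> t'" "t' \<le> length ms" "v \<notin> fast t" "v \<in> fast t'"
  shows "\<exists>\<tau>. t \<le> \<tau> \<and> \<tau> < t' \<and> (ms ! \<tau> = Load v \<or> ms ! \<tau> = Compute v)"
  using assms
proof (induction t' rule: dec_induct)
  case (step t')
  show ?case
  proof (cases "v \<in> fast t'")
    case True
    with step show ?thesis by (metis Suc_leD less_SucI)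
  next
    case False
    with step_fast_new[OF step_at[of t']] step show ?thesis by force
  qed
qed simp

lemma slow_imp_Store_before:
  "t \<le> length ms \<Longrightarrow> v \<in> slow t \<Longrightarrow> \<exists>\<tau><t. ms ! \<tau> = Store v"
proof (induction t)
  case (Suc t)
  then show ?case
    using step_slow_new[OF step_at[of t]] by (cases "v \<in> slow t") (auto intro: less_SucI)
qed (simp add: state_at_0)

lemma Load_imp_Store_before:
  assumes "t < length ms" "ms ! t = Load v"
  shows "\<exists>\<tau><t. ms ! \<tau> = Store v"
  using assms slow_imp_Store_before step_Load[OF step_at] by simp

definition compute_time :: "nat \<Rightarrow> nat" where
  "compute_time v = (THE t. t < length ms \<and> ms ! t = Compute v)"

lemma compute_time:
  assumes "v < n"
  shows "compute_time v < length ms" "ms ! compute_time v = Compute v"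
proof -
  have "v \<in> computed (length ms)" using computed_final assms by simp
  then obtain t where "t < length ms" "ms ! t = Compute v" using computed_eq[of "length ms"] by auto
  then have "\<exists>!t. t < length ms \<and> ms ! t = Compute v" using Compute_unique by blast
  from theI'[OF this] show "compute_time v < length ms" "ms ! compute_time v = Compute v"
    unfolding compute_time_def by simp_all
qed

lemma compute_time_eqI:
  assumes "t < length ms" "ms ! t = Compute v"
  shows "v < n" "compute_time v = t"
proof -
  show v: "v < n" using step_Compute[OF step_at] assms by blast
  show "compute_time v = t" using Compute_unique compute_time[OF v] assms by blast
qed

lemma inj_on_compute_time: "inj_on compute_time {..<n}"
  by (rule inj_onI) (metis compute_time(2) lessThan_iff move.inject(4))

lemma compute_time_edge:
  assumes uv: "(u, v) \<in> E" and v: "v < n"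
  shows "u \<in> fast (compute_time v)" "u < n" "compute_time u < compute_time v"
proof -
  note v_time = compute_time(1)[OF v]
  show u: "u \<in> fast (compute_time v)" using step_Compute[OF step_at] compute_time assms by blast
  then have "u \<in> computed (compute_time v)"
    using state_invariant[of "compute_time v"] v_time by auto
  then obtain t where "t < compute_time v" "ms ! t = Compute u"
    using computed_eq[of "compute_time v"] v_time by auto
  then show "u < n" "compute_time u < compute_time v" using compute_time_eqI[of t u] v_time by auto
qed

lemma fast_earlier_or_Load_between:
  assumes "u \<in> fast t'" "compute_time u < t" "t \<le> t'" "t' \<le> length ms" "u < n"
  shows "u \<in> fast t \<or> (\<exists>\<tau>. t \<le> \<tau> \<and> \<tau> < t' \<and> ms ! \<tau> = Load u)"
proof (cases "u \<in> fast t")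
  case False
  then obtain \<tau> where \<tau>: "t \<le> \<tau>" "\<tau> < t'" and "ms ! \<tau> = Load u \<or> ms ! \<tau> = Compute u"
    using fast_entered_by_Load_or_Compute assms by blast
  moreover have "ms ! \<tau> \<noteq> Compute u" using compute_time_eqI[of \<tau> u] assms \<tau> by auto
  ultimately show ?thesis by auto
qed simp

definition segment :: "(nat \<Rightarrow> nat) \<Rightarrow> nat \<Rightarrow> nat set" where
  "segment sig j = {v. v < n \<and> sig j \<le> compute_time v \<and> compute_time v < sig (Suc j)}"

lemma segment_subset: "segment sig j \<subseteq> {..<n}"
  unfolding segment_def by auto

lemma segments_disjoint: "mono sig \<Longrightarrow> i \<noteq> j \<Longrightarrow> segment sig i \<inter> segment sig j = {}"
  using mono_intervals_disjoint[of sig i j] unfolding segment_def by blast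

lemma balanced_segments:
  assumes k: "0 < k" "k \<le> n"
  obtains sig where "mono sig" "sig k = length ms" "(\<Union>j<k. segment sig j) = {..<n}"
    "\<And>j. j < k \<Longrightarrow> n div k \<le> card (segment sig j)"
proof -
  let ?X = "compute_time ` {..<n}"
  have "card ?X = n" using card_image[OF inj_on_compute_time] by simp
  moreover have "?X \<subseteq> {..<length ms}" using compute_time(1) by auto
  ultimately obtain sig where sig: "mono sig" "sig k = length ms"
    and cover: "\<And>x. x \<in> ?X \<Longrightarrow> \<exists>j<k. sig j \<le> x \<and> x < sig (Suc j)"
    and card: "\<And>j. j < k \<Longrightarrow> n div k \<le> card {x \<in> ?X. sig j \<le> x \<and> x < sig (Suc j)}"
    using balanced_interval_partition[of ?X "length ms" k] k by auto
  show thesis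
  proof (rule that[OF sig])
    show "(\<Union>j<k. segment sig j) = {..<n}" using cover by (auto simp: segment_def)
    fix j assume "j < k"
    have "{x \<in> ?X. sig j \<le> x \<and> x < sig (Suc j)} = compute_time ` segment sig j"
      by (auto simp: segment_def)
    also have "card \<dots> = card (segment sig j)"
      using inj_on_subset[OF inj_on_compute_time segment_subset] by (rule card_image)
    finally show "n div k \<le> card (segment sig j)" using card[OF \<open>j < k\<close>] by simp
  qed
qed

lemma out_boundary_segment_subset:
  "out_boundary E n (segment sig j) \<subseteq> vertex_at ` store_times \<union> fast (sig (Suc j))"
proof
  fix u assume "u \<in> out_boundary E n (segment sig j)"
  then obtain v where u: "u \<in> segment sig j" and v: "v < n" "v \<notin> segment sig j"
    and uv: "(u, v) \<in> E"
    unfolding out_boundary_def by auto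
  note v_time = compute_time(1)[OF v(1)]
  have "sig (Suc j) \<le> compute_time v" and "compute_time u < sig (Suc j)"
    using u v compute_time_edge[OF uv v(1)] by (auto simp: segment_def)
  then consider "u \<in> fast (sig (Suc j))" | \<tau> where "\<tau> < compute_time v" "ms ! \<tau> = Load u"
    using fast_earlier_or_Load_between[of u "compute_time v" "sig (Suc j)"]
      compute_time_edge[OF uv v(1)] v_time
    by fastforce
  then show "u \<in> vertex_at ` store_times \<union> fast (sig (Suc j))"
  proof cases
    case (2 \<tau>)
    then obtain \<tau>' where \<tau>': "\<tau>' < \<tau>" "ms ! \<tau>' = Store u"
      using Load_imp_Store_before[of \<tau> u] v_time by auto
    then have "\<tau>' \<in> store_times" using 2 v_time by (auto simp: store_times_def is_store_def)
    moreover have "u = vertex_at \<tau>'" using \<tau>'(2) by simp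
    ultimately show ?thesis by blast
  qed simp
qed

lemma in_boundary_segment_subset:
  "in_boundary E n (segment sig j) \<subseteq> fast (sig j) \<union> vertex_at ` load_times (sig j) (sig (Suc j))"
proof
  fix v assume "v \<in> in_boundary E n (segment sig j)"
  then obtain u where v: "v < n" "v \<notin> segment sig j" and u: "u \<in> segment sig j"
    and vu: "(v, u) \<in> E"
    unfolding in_boundary_def by auto
  have u_n: "u < n" and u_time: "sig j \<le> compute_time u" "compute_time u < sig (Suc j)"
    using u by (auto simp: segment_def)
  note edge = compute_time_edge[OF vu u_n]
  have "compute_time v < sig j" using v edge u_time by (auto simp: segment_def)
  then consider "v \<in> fast (sig j)" | \<tau> where "sig j \<le> \<tau>" "\<tau> < compute_time u" "ms ! \<tau> = Load v"
    using fast_earlier_or_Load_between[of v "compute_time u" "sig j"] edge u_time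
      compute_time(1)[OF u_n]
    by fastforce
  then show "v \<in> fast (sig j) \<union> vertex_at ` load_times (sig j) (sig (Suc j))"
  proof cases
    case (2 \<tau>)
    then have "\<tau> \<in> load_times (sig j) (sig (Suc j))"
      using compute_time(1)[OF u_n] u_time by (auto simp: load_times_def is_load_def)
    moreover have "v = vertex_at \<tau>" using 2 by simp
    ultimately show ?thesis by blast
  qed simp
qed

lemma fast_segment_bound:
  assumes "mono sig" "sig k \<le> length ms" "j \<le> k"
  shows "finite (fast (sig j))" "card (fast (sig j)) \<le> M"
  using state_invariant[of "sig j"] monoD[OF assms(1,3)] assms(2) by auto

lemma card_out_boundaries:
  assumes sig: "mono sig" "sig k \<le> length ms"
  shows "(\<Sum>j<k. card (out_boundary E n (segment sig j))) \<le> card store_times + k * M"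
proof -
  have "(\<Sum>j<k. card (out_boundary E n (segment sig j)))
      = card (\<Union>j<k. out_boundary E n (segment sig j))"
    using segments_disjoint[OF sig(1)] finite_subset[OF segment_subset]
    by (intro card_UN_disjoint[symmetric]) (auto simp: out_boundary_def)
  also have "\<dots> \<le> card (vertex_at ` store_times \<union> (\<Union>j<k. fast (sig (Suc j))))"
  proof (rule card_mono)
    show "finite (vertex_at ` store_times \<union> (\<Union>j<k. fast (sig (Suc j))))"
      using fast_segment_bound(1)[OF sig] by (simp add: store_times_def Suc_le_eq)
    show "(\<Union>j<k. out_boundary E n (segment sig j))
        \<subseteq> vertex_at ` store_times \<union> (\<Union>j<k. fast (sig (Suc j)))"
      using out_boundary_segment_subset[of sig] by blast
  qed
  also have "\<dots> \<le> card (vertex_at ` store_times) + (\<Sum>j<k. card (fast (sig (Suc j))))"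
    by (rule order.trans[OF card_Un_le add_left_mono[OF card_UN_le]]) simp
  also have "\<dots> \<le> card store_times + k * M"
  proof (rule add_mono)
    show "card (vertex_at ` store_times) \<le> card store_times"
      by (rule card_image_le) (simp add: store_times_def)
    show "(\<Sum>j<k. card (fast (sig (Suc j)))) \<le> k * M"
      using sum_bounded_above[of "{..<k}" "\<lambda>j. card (fast (sig (Suc j)))" M]
        fast_segment_bound(2)[OF sig]
      by (simp add: Suc_le_eq)
  qed
  finally show ?thesis .
qed

lemma card_in_boundaries:
  assumes sig: "mono sig" "sig k \<le> length ms"
  shows "(\<Sum>j<k. card (in_boundary E n (segment sig j))) \<le> card (load_times 0 (length ms)) + k * M"
proof -
  have "(\<Sum>j<k. card (in_boundary E n (segment sig j)))
      \<le> (\<Sum>j<k. M + card (load_times (sig j) (sig (Suc j))))"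
  proof (rule sum_mono)
    fix j assume j: "j \<in> {..<k}"
    have fin: "finite (load_times (sig j) (sig (Suc j)))" by (simp add: load_times_def)
    have "card (in_boundary E n (segment sig j))
        \<le> card (fast (sig j) \<union> vertex_at ` load_times (sig j) (sig (Suc j)))"
      using in_boundary_segment_subset[of sig j] fast_segment_bound[OF sig, of j] j fin
      by (intro card_mono) auto
    also have "\<dots> \<le> card (fast (sig j)) + card (load_times (sig j) (sig (Suc j)))"
      by (rule order.trans[OF card_Un_le add_left_mono[OF card_image_le[OF fin]]])
    finally show "card (in_boundary E n (segment sig j))
        \<le> M + card (load_times (sig j) (sig (Suc j)))"
      using fast_segment_bound(2)[OF sig, of j] j by simp
  qed
  moreover have "(\<Sum>j<k. card (load_times (sig j) (sig (Suc j))))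
      = card (\<Union>j<k. load_times (sig j) (sig (Suc j)))"
    using mono_intervals_disjoint[OF sig(1)]
    by (intro card_UN_disjoint[symmetric]) (auto simp: load_times_def)
  moreover have "card (\<Union>j<k. load_times (sig j) (sig (Suc j))) \<le> card (load_times 0 (length ms))"
    by (intro card_mono) (auto simp: load_times_def)
  ultimately show ?thesis by (simp add: sum.distrib)
qed

lemma cut_weight_le_io_cost:
  assumes sig: "mono sig" "sig k \<le> length ms"
  shows "(\<Sum>j<k. \<Sum>u\<in>segment sig j. \<Sum>v\<in>{..<n} - segment sig j. wadj E u v)
    \<le> real (io_cost ms) + 2 * real k * real M"
proof -
  have "(\<Sum>j<k. \<Sum>u\<in>segment sig j. \<Sum>v\<in>{..<n} - segment sig j. wadj E u v)
      \<le> (\<Sum>j<k. real (card (out_boundary E n (segment sig j))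
          + card (in_boundary E n (segment sig j))))"
    using cut_weight_le_boundary[OF segment_subset] by (intro sum_mono) simp
  also have "\<dots> = real ((\<Sum>j<k. card (out_boundary E n (segment sig j)))
      + (\<Sum>j<k. card (in_boundary E n (segment sig j))))"
    by (simp add: sum.distrib)
  also have "\<dots> \<le> real (io_cost ms + 2 * k * M)"
    using card_out_boundaries[OF sig] card_in_boundaries[OF sig] io_cost_eq
    by (intro of_nat_mono) linarith
  finally show ?thesis by simp
qed

lemma spectral_bound_le_io_cost:
  assumes k: "0 < k" "k \<le> n"
  shows "real (n div k) * (\<Sum>i<k. sorted_eigenvalues (laplacian n E) ! i) - 2 * real k * real M
    \<le> real (io_cost ms)"
proof -
  let ?L = "laplacian n E" and ?lam = "(!) (sorted_eigenvalues (laplacian n E))"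
  obtain sig where sig: "mono sig" "sig k = length ms" and cover: "(\<Union>j<k. segment sig j) = {..<n}"
    and card: "\<And>j. j < k \<Longrightarrow> n div k \<le> card (segment sig j)"
    using balanced_segments[OF k] by blast
  obtain P where P: "P \<in> carrier_mat n n"
      "transpose_mat P * P = 1\<^sub>m n" "P * transpose_mat P = 1\<^sub>m n"
    and L: "?L = P * mat_diag n ?lam * transpose_mat P"
    using sorted_eigenvalues_spectral_decomposition[OF laplacian_carrier_mat transpose_laplacian] .
  have cut: "(\<Sum>u\<in>segment sig j. \<Sum>v\<in>segment sig j. ?L $$ (u, v))
      = (\<Sum>u\<in>segment sig j. \<Sum>v\<in>{..<n} - segment sig j. wadj E u v)" for j
    by (rule laplacian_indicator_form[OF segment_subset])
  have "real (n div k) * (\<Sum>i<k. ?lam i) \<le> (\<Sum>j<k. \<Sum>u\<in>segment sig j. \<Sum>v\<in>segment sig j. ?L $$ (u, v))"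
  proof (rule sum_smallest_eigenvalues_partition_bound
      [OF P L _ segments_disjoint[OF sig(1)] cover k(2) card])
    show "?lam i \<le> ?lam j" if "i \<le> j" "j < n" for i j
      using that length_sorted_eigenvalues[OF laplacian_carrier_mat transpose_laplacian]
      by (intro sorted_nth_mono) (auto simp: sorted_eigenvalues_def)
    show "0 < n div k" using k by (simp add: div_greater_zero_iff)
    show "0 \<le> (\<Sum>u\<in>segment sig j. \<Sum>v\<in>segment sig j. ?L $$ (u, v))" for j
      unfolding cut by (intro sum_nonneg wadj_nonneg)
  qed
  also have "\<dots> \<le> real (io_cost ms) + 2 * real k * real M"
    unfolding cut using sig by (intro cut_weight_le_io_cost) auto
  finally show ?thesis by simp
qed

end

theorem theorem4p4:
  fixes n M k :: nat and E :: "nat rel"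
  assumes "E \<subseteq> {0..<n} \<times> {0..<n}"
    and "acyclic E"
    and "1 \<le> k" and "k \<le> n"
  shows "J_star n E M \<ge>
    ereal (real (n div k) * (\<Sum>i<k. sorted_eigenvalues (laplacian n E) ! i) - 2 * real k * real M)"
  unfolding J_star_def
proof (rule INF_greatest)
  fix ms assume "ms \<in> {ms. valid_evaluation n E M ms}"
  then interpret evaluation n E M ms by unfold_locales simp
  show "ereal (real (n div k) * (\<Sum>i<k. sorted_eigenvalues (laplacian n E) ! i)
      - 2 * real k * real M) \<le> ereal (real (io_cost ms))"
    using spectral_bound_le_io_cost assms(3,4) by simp
qed

end
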